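(* Let $V$ be a finite set and $\mathcal{F}\subseteq 2^V$ a minimal hereditary family with $\delta(\mathcal{F})\ge 12$. Then every $F\in\mathcal{F}$ satisfies $|F|\le 4$.
   Context: A family $\mathcal{F}\subseteq 2^V$ is hereditary if $F'\subseteq F\in\mathcal{F}$ implies $F'\in\mathcal{F}$. For $x\in V$, $d_{\mathcal{F}}(x)=|\{F\in\mathcal{F}: x\in F\}|$ and $\delta(\mathcal{F})=\min_{x\in V}d_{\mathcal{F}}(x)$. A set $F\in\mathcal{F}$ is maximal if no other member of $\mathcal{F}$ strictly contains it. A hereditary family $\mathcal{F}$ with $\delta(\mathcal{F})\ge 12$ is called minimal if for every maximal $F\in\mathcal{F}$ we have $\delta(\mathcal{F}\setminus\{F\})\le 11$. *)

theory Defs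
  imports Main
begin

definition hereditary :: "'a set set \<Rightarrow> bool" where
  "hereditary \<F> \<longleftrightarrow> (\<forall>F G. F \<in> \<F> \<longrightarrow> G \<subseteq> F \<longrightarrow> G \<in> \<F>)"

definition degree :: "'a set set \<Rightarrow> 'a \<Rightarrow> nat" where
  "degree \<F> x = card {F \<in> \<F>. x \<in> F}"

definition min_degree_ge :: "'a set \<Rightarrow> 'a set set \<Rightarrow> nat \<Rightarrow> bool" where
  "min_degree_ge V \<F> k \<longleftrightarrow> (\<forall>x\<in>V. degree \<F> x \<ge> k)"

definition maximal_member :: "'a set set \<Rightarrow> 'a set \<Rightarrow> bool" where
  "maximal_member \<F> F \<longleftrightarrow> F \<in> \<F> \<and> (\<forall>G\<in>\<F>. F \<subseteq> G \<longrightarrow> G = F)"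

definition minimal_family :: "'a set \<Rightarrow> 'a set set \<Rightarrow> bool" where
  "minimal_family V \<F> \<longleftrightarrow> hereditary \<F> \<and> min_degree_ge V \<F> 12 \<and>
     (\<forall>F. maximal_member \<F> F \<longrightarrow> (\<exists>x\<in>V. degree (\<F> - {F}) x \<le> 11))"

end

theory Submission
  imports Defs
begin

text \<open>If some member had at least five elements, it would lie in a maximal member \<open>M\<close>
  with \<open>|M| \<ge> 5\<close>. Removing \<open>M\<close> lowers only the degrees of the points of \<open>M\<close>, and
  each of them, lying in every set \<open>{x} \<union> H\<close> with \<open>H \<subseteq> M - {x}\<close>, has degree at least
  \<open>2\<^sup>4 = 16\<close>, so it still has degree at least 15. Hence removing \<open>M\<close> keeps
  the minimum degree at least 12, contradicting minimality.\<close>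

lemma finite_family_ex_maximal_member:
  assumes "finite \<F>" and "F \<in> \<F>"
  obtains M where "maximal_member \<F> M" and "F \<subseteq> M"
proof -
  obtain M where "M \<in> \<F>" "F \<subseteq> M" "\<forall>G\<in>\<F>. M \<subseteq> G \<longrightarrow> M = G"
    using finite_has_maximal2[OF assms] by blast
  then show ?thesis using that unfolding maximal_member_def by metis
qed

lemma degree_Diff_singleton_notin:
  assumes "x \<notin> M"
  shows "degree (\<F> - {M}) x = degree \<F> x"
proof -
  have "{G \<in> \<F> - {M}. x \<in> G} = {G \<in> \<F>. x \<in> G}" using assms by auto
  then show ?thesis unfolding degree_def by simp
qed

lemma degree_Diff_singleton_in:
  assumes "finite \<F>" and "M \<in> \<F>" and "x \<in> M"
  shows "degree (\<F> - {M}) x = degree \<F> x - 1"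
proof -
  have "{G \<in> \<F> - {M}. x \<in> G} = {G \<in> \<F>. x \<in> G} - {M}" by auto
  then show ?thesis unfolding degree_def using assms by (simp add: card_Diff_singleton)
qed

lemma hereditary_degree_ge_pow:
  assumes "hereditary \<F>" and "finite \<F>" and "M \<in> \<F>" and "finite M" and "x \<in> M"
  shows "2 ^ (card M - 1) \<le> degree \<F> x"
proof -
  have "inj_on (insert x) (Pow (M - {x}))" unfolding inj_on_def by blast
  then have "card (insert x ` Pow (M - {x})) = 2 ^ (card M - 1)"
    using assms(4,5) by (simp add: card_image card_Pow)
  moreover have "insert x ` Pow (M - {x}) \<subseteq> {G \<in> \<F>. x \<in> G}"
    using assms(1,3,5) unfolding hereditary_def by blast
  moreover have "finite {G \<in> \<F>. x \<in> G}" using assms(2) by simp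
  ultimately show ?thesis unfolding degree_def by (metis card_mono)
qed

theorem mainTheorem5:
  fixes V :: "'a set" and \<F> :: "'a set set"
  assumes "finite V" and "\<F> \<subseteq> Pow V"
    and "minimal_family V \<F>"
  shows "\<forall>F\<in>\<F>. card F \<le> 4"
proof (rule ballI, rule ccontr)
  fix F assume "F \<in> \<F>" and "\<not> card F \<le> 4"
  have her: "hereditary \<F>" and deg: "\<And>x. x \<in> V \<Longrightarrow> degree \<F> x \<ge> 12"
    and min: "\<And>M. maximal_member \<F> M \<Longrightarrow> \<exists>x\<in>V. degree (\<F> - {M}) x \<le> 11"
    using assms(3) unfolding minimal_family_def min_degree_ge_def by auto
  have fin\<F>: "finite \<F>" using assms(1,2) by (simp add: finite_subset)
  obtain M where max: "maximal_member \<F> M" and "F \<subseteq> M"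
    using finite_family_ex_maximal_member[OF fin\<F> \<open>F \<in> \<F>\<close>] .
  have "M \<in> \<F>" using max unfolding maximal_member_def by simp
  then have "finite M" using assms(1,2) by (meson PowD finite_subset subsetD)
  then have "card M \<ge> 5" using \<open>\<not> card F \<le> 4\<close> card_mono[OF _ \<open>F \<subseteq> M\<close>] by linarith
  obtain x where "x \<in> V" and drop: "degree (\<F> - {M}) x \<le> 11" using min[OF max] by blast
  show False
  proof (cases "x \<in> M")
    case True
    have "(16::nat) \<le> 2 ^ (card M - 1)"
      using power_increasing[of 4 "card M - 1" "2::nat"] \<open>card M \<ge> 5\<close> by simp
    moreover have "2 ^ (card M - 1) \<le> degree \<F> x"
      using hereditary_degree_ge_pow[OF her fin\<F> \<open>M \<in> \<F>\<close> \<open>finite M\<close> True] .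
    ultimately show False
      using drop degree_Diff_singleton_in[OF fin\<F> \<open>M \<in> \<F>\<close> True] by linarith
  next
    case False
    then show False using drop deg[OF \<open>x \<in> V\<close>] degree_Diff_singleton_notin[OF False] by simp
  qed
qed

end
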